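(* Let $X$ be a topological space and $a\in\mathscr{C}_{\mathrm{a.e.}}(X)$. Then there is a unique representative $a_{\max}\in a$ such that $f=a_{\max}|_{\operatorname{dom}f}$ for all $f\in a$. In particular $\operatorname{dom}a_{\max}\supseteq\operatorname{dom}f$ for all $f\in a$.
   Context: $\mathscr{C}_{\mathrm{a.e.}}(X)$: consider continuous real-valued functions $f$ defined on dense open subsets $\operatorname{dom}f$ of $X$; define $f+g$, $fg$ pointwise on $\operatorname{dom}f\cap\operatorname{dom}g$; $f\approx g$ iff $f|_A=g|_A$ for some dense open $A\subseteq\operatorname{dom}f\cap\operatorname{dom}g$. $\mathscr{C}_{\mathrm{a.e.}}(X)$ is the set of $\approx$-equivalence classes (each element $a$ is thus a set of such functions, its representatives). *)

theory Defs
  imports "HOL-Analysis.Analysis"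
begin

definition dense_open :: "'a::topological_space set \<Rightarrow> bool" where
  "dense_open A \<longleftrightarrow> open A \<and> closure A = UNIV"

definition ae_rep :: "('a::topological_space \<rightharpoonup> real) \<Rightarrow> bool" where
  "ae_rep f \<longleftrightarrow> dense_open (dom f) \<and> continuous_on (dom f) (\<lambda>x. the (f x))"

definition ae_eq :: "('a::topological_space \<rightharpoonup> real) \<Rightarrow> ('a \<rightharpoonup> real) \<Rightarrow> bool" where
  "ae_eq f g \<longleftrightarrow> (\<exists>A. dense_open A \<and> A \<subseteq> dom f \<inter> dom g \<and> (\<forall>x\<in>A. f x = g x))"

definition ae_rel :: "(('a::topological_space \<rightharpoonup> real) \<times> ('a \<rightharpoonup> real)) set" where
  "ae_rel = {(f, g). ae_rep f \<and> ae_rep g \<and> ae_eq f g}"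

definition C_ae :: "('a::topological_space \<rightharpoonup> real) set set" where
  "C_ae = {f. ae_rep f} // ae_rel"

end

theory Submission
  imports Defs
begin

text \<open>Any two representatives of a class agree wherever both are defined, because
  the open set on which they differ misses the dense set on which they coincide.
  Hence all representatives glue to a single map on the union of their domains;
  this map is again continuous on a dense open set, so it lies in the class and
  extends every representative.\<close>

lemma dense_open_Int:
  assumes "dense_open A" "dense_open B"
  shows "dense_open (A \<inter> B)"
proof -
  have "A \<inter> closure B \<subseteq> closure (A \<inter> B)"
    using open_Int_closure_subset assms unfolding dense_open_def by blast
  then have "closure (A \<inter> closure B) \<subseteq> closure (A \<inter> B)"
    by (simp add: closure_minimal)
  then show ?thesis
    using assms unfolding dense_open_def by auto
qed

lemma continuous_on_eq_on_dense:
  fixes f g :: "'a::topological_space \<Rightarrow> 'b::real_normed_vector"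
  assumes "open U" "continuous_on U f" "continuous_on U g"
    and "closure A = UNIV" "\<forall>y\<in>A \<inter> U. f y = g y" "x \<in> U"
  shows "f x = g x"
proof (rule ccontr)
  assume "f x \<noteq> g x"
  define V where "V = (\<lambda>y. f y - g y) -` (- {0}) \<inter> U"
  have "continuous_on U (\<lambda>y. f y - g y)"
    using assms(2,3) by (rule continuous_on_diff)
  then have "open V"
    unfolding V_def using continuous_on_open_vimage[OF \<open>open U\<close>]
    by (meson open_Compl closed_singleton)
  moreover have "V \<inter> closure A \<noteq> {}"
    using \<open>f x \<noteq> g x\<close> \<open>x \<in> U\<close> \<open>closure A = UNIV\<close> unfolding V_def by auto
  ultimately have "V \<inter> A \<noteq> {}"
    using open_Int_closure_eq_empty by blast
  then show False
    using assms(5) unfolding V_def by auto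
qed

definition compatible_maps :: "('a \<rightharpoonup> 'b) set \<Rightarrow> bool" where
  "compatible_maps F \<longleftrightarrow> (\<forall>f\<in>F. \<forall>g\<in>F. \<forall>x\<in>dom f \<inter> dom g. f x = g x)"

definition map_Union :: "('a \<rightharpoonup> 'b) set \<Rightarrow> 'a \<rightharpoonup> 'b" where
  "map_Union F x =
    (if \<exists>f\<in>F. x \<in> dom f then Some (SOME y. \<exists>f\<in>F. f x = Some y) else None)"

lemma dom_map_Union: "dom (map_Union F) = (\<Union>f\<in>F. dom f)"
  unfolding map_Union_def dom_def by auto

lemma map_Union_eq:
  assumes "compatible_maps F" "f \<in> F" "x \<in> dom f"
  shows "map_Union F x = f x"
proof -
  obtain y where y: "f x = Some y"
    using assms(3) by blast
  have "(SOME y. \<exists>g\<in>F. g x = Some y) = y"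
  proof (rule some_equality)
    show "\<exists>g\<in>F. g x = Some y"
      using assms(2) y by blast
    show "y' = y" if y': "\<exists>g\<in>F. g x = Some y'" for y'
    proof -
      obtain g where "g \<in> F" "g x = Some y'"
        using y' by blast
      then have "g x = f x"
        using assms domI[of g x y'] unfolding compatible_maps_def by blast
      then show ?thesis
        using \<open>g x = Some y'\<close> y by simp
    qed
  qed
  then show ?thesis
    using assms(2,3) y by (auto simp: map_Union_def)
qed

lemma map_le_map_Union:
  assumes "compatible_maps F"
    and "f \<in> F"
  shows "f \<subseteq>\<^sub>m map_Union F"
  using map_Union_eq[OF assms] by (auto simp: map_le_def)

lemma map_le_iff_restrict: "f \<subseteq>\<^sub>m g \<longleftrightarrow> f = g |` dom f"
  by (auto simp: map_le_def restrict_map_def fun_eq_iff dom_def)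

lemma ae_rep_agree:
  assumes "ae_rep f" "ae_rep g" "ae_eq f g" "x \<in> dom f" "x \<in> dom g"
  shows "f x = g x"
proof -
  obtain A where A: "dense_open A" "A \<subseteq> dom f \<inter> dom g" "\<forall>y\<in>A. f y = g y"
    using \<open>ae_eq f g\<close> unfolding ae_eq_def by blast
  have "the (f x) = the (g x)"
  proof (rule continuous_on_eq_on_dense[where U = "dom f \<inter> dom g" and A = A])
    show "open (dom f \<inter> dom g)"
      using assms(1,2) unfolding ae_rep_def dense_open_def by auto
    show "continuous_on (dom f \<inter> dom g) (\<lambda>y. the (f y))"
         "continuous_on (dom f \<inter> dom g) (\<lambda>y. the (g y))"
      using assms(1,2) unfolding ae_rep_def by (auto intro: continuous_on_subset)
  qed (use A assms(4,5) in \<open>auto simp: dense_open_def\<close>)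
  then show ?thesis
    using assms(4,5) by auto
qed

lemma equiv_ae_rel: "equiv {f. ae_rep f} ae_rel"
proof (rule equivI)
  show "ae_rel \<subseteq> {f. ae_rep f} \<times> {f. ae_rep f}"
    by (auto simp: ae_rel_def)
  show "refl_on {f. ae_rep f} ae_rel"
    unfolding refl_on_def ae_rel_def ae_eq_def by (auto simp: ae_rep_def)
  show "sym ae_rel"
    by (auto simp: sym_def ae_rel_def ae_eq_def)
  show "trans ae_rel"
  proof (rule transI)
    fix f g h assume "(f, g) \<in> ae_rel" "(g, h) \<in> ae_rel"
    then have reps: "ae_rep f" "ae_rep h" and "ae_eq f g" "ae_eq g h"
      by (auto simp: ae_rel_def)
    then obtain A B where "dense_open A" "A \<subseteq> dom f \<inter> dom g" "\<forall>x\<in>A. f x = g x"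
      and "dense_open B" "B \<subseteq> dom g \<inter> dom h" "\<forall>x\<in>B. g x = h x"
      unfolding ae_eq_def by blast
    then have "ae_eq f h"
      unfolding ae_eq_def by (intro exI[of _ "A \<inter> B"]) (auto simp: dense_open_Int)
    with reps show "(f, h) \<in> ae_rel"
      by (simp add: ae_rel_def)
  qed
qed

lemma C_ae_ae_rep: "a \<in> C_ae \<Longrightarrow> f \<in> a \<Longrightarrow> ae_rep f"
  using in_quotient_imp_subset[OF equiv_ae_rel] unfolding C_ae_def by blast

lemma C_ae_compatible:
  assumes "a \<in> C_ae"
  shows "compatible_maps a"
  unfolding compatible_maps_def
proof (intro ballI)
  fix f g x assume "f \<in> a" "g \<in> a" "x \<in> dom f \<inter> dom g"
  moreover have "(f, g) \<in> ae_rel"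
    using in_quotient_imp_in_rel[OF equiv_ae_rel] assms \<open>f \<in> a\<close> \<open>g \<in> a\<close>
    unfolding C_ae_def by blast
  ultimately show "f x = g x"
    using ae_rep_agree unfolding ae_rel_def by blast
qed

lemma ae_rep_map_Union:
  assumes "compatible_maps F"
    and "\<And>f. f \<in> F \<Longrightarrow> ae_rep f" "f0 \<in> F"
  shows "ae_rep (map_Union F)"
  unfolding ae_rep_def dense_open_def dom_map_Union
proof (intro conjI)
  show "open (\<Union>f\<in>F. dom f)"
    using assms(2) unfolding ae_rep_def dense_open_def by auto
  have "closure (dom f0) \<subseteq> closure (\<Union>f\<in>F. dom f)"
    using assms(3) by (intro closure_mono) auto
  then show "closure (\<Union>f\<in>F. dom f) = UNIV"
    using assms(2,3) unfolding ae_rep_def dense_open_def by auto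
  show "continuous_on (\<Union>f\<in>F. dom f) (\<lambda>x. the (map_Union F x))"
  proof (rule continuous_on_open_Union)
    fix S assume "S \<in> dom ` F"
    then obtain f where f: "f \<in> F" "S = dom f" by auto
    then show "open S"
      using assms(2) unfolding ae_rep_def dense_open_def by auto
    have "continuous_on (dom f) (\<lambda>x. the (f x))"
      using assms(2) f(1) unfolding ae_rep_def by auto
    then show "continuous_on S (\<lambda>x. the (map_Union F x))"
      using f map_Union_eq[OF assms(1) f(1)] by (auto intro: continuous_on_cong[THEN iffD1])
  qed
qed

lemma map_Union_in_C_ae:
  assumes "a \<in> C_ae"
  shows "map_Union a \<in> a"
proof -
  obtain f0 where f0: "f0 \<in> a"
    using in_quotient_imp_non_empty[OF equiv_ae_rel] assms unfolding C_ae_def by blast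
  have reps: "\<And>f. f \<in> a \<Longrightarrow> ae_rep f"
    using C_ae_ae_rep[OF assms] .
  have "ae_rep (map_Union a)"
    using ae_rep_map_Union[OF C_ae_compatible[OF assms] reps f0] .
  moreover have "ae_eq f0 (map_Union a)"
    unfolding ae_eq_def
  proof (intro exI[of _ "dom f0"] conjI)
    show "dense_open (dom f0)"
      using reps[OF f0] by (simp add: ae_rep_def)
    show "dom f0 \<subseteq> dom f0 \<inter> dom (map_Union a)"
      using f0 by (auto simp: dom_map_Union)
    show "\<forall>x\<in>dom f0. f0 x = map_Union a x"
      using map_Union_eq[OF C_ae_compatible[OF assms] f0] by simp
  qed
  ultimately have "(f0, map_Union a) \<in> ae_rel"
    using reps[OF f0] by (simp add: ae_rel_def)
  then show ?thesis
    using in_quotient_imp_closed[OF equiv_ae_rel] assms f0 unfolding C_ae_def by blast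
qed

theorem proposition16:
  fixes a :: "('a::topological_space \<rightharpoonup> real) set"
  assumes "a \<in> C_ae"
  shows "(\<exists>!amax. amax \<in> a \<and> (\<forall>f\<in>a. f = amax |` dom f))
    \<and> (\<forall>amax. amax \<in> a \<and> (\<forall>f\<in>a. f = amax |` dom f) \<longrightarrow> (\<forall>f\<in>a. dom f \<subseteq> dom amax))"
proof -
  have in_a: "map_Union a \<in> a"
    using map_Union_in_C_ae[OF assms] .
  have extends: "f \<subseteq>\<^sub>m map_Union a" if "f \<in> a" for f
    using map_le_map_Union[OF C_ae_compatible[OF assms] that] .
  have "\<exists>!amax. amax \<in> a \<and> (\<forall>f\<in>a. f \<subseteq>\<^sub>m amax)"
  proof (rule ex1I[of _ "map_Union a"])
    show "map_Union a \<in> a \<and> (\<forall>f\<in>a. f \<subseteq>\<^sub>m map_Union a)"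
      using in_a extends by blast
    show "m = map_Union a" if "m \<in> a \<and> (\<forall>f\<in>a. f \<subseteq>\<^sub>m m)" for m
      using that in_a extends map_le_antisym by blast
  qed
  moreover have "\<forall>amax. amax \<in> a \<and> (\<forall>f\<in>a. f \<subseteq>\<^sub>m amax) \<longrightarrow> (\<forall>f\<in>a. dom f \<subseteq> dom amax)"
    using map_le_implies_dom_le by blast
  ultimately show ?thesis
    by (simp only: map_le_iff_restrict)
qed

end
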